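(* Let $\mathcal{L},\tilde{\mathcal{L}}$ be distributions on $[0,\infty]$ satisfying: (H1) $\mathcal{L}$ is useful; (H2) $\mathcal{L}([0,\infty))>p_c$ and $\tilde{\mathcal{L}}([0,\infty))>p_c$; (H3) $\mathcal{L}\ne\tilde{\mathcal{L}}$; and let $(\tau,\tilde\tau)$ be a pair of random variables with marginals $\mathcal{L},\tilde{\mathcal{L}}$ and $\mathbb{E}[\tilde\tau\mid\tau]\le\tau$. Assume moreover that $\mathbb{P}(\mathbb{E}[\tilde\tau\mid\tau]=\tau)=1$ and $\{\tau<\infty\}=\{\tilde\tau<\infty\}$ almost surely. Then there exist $\beta>0$ and $\delta>0$ such that \[\mathbb{P}\big(\tau<\infty,\ \mathbb{P}(\tilde\tau\le\tau-2\delta\mid\tau)\ge\beta,\ \mathbb{P}(\tilde\tau\ge\tau\mid\tau)\ge\beta\big)>0.\]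
   Context: $p_c$ / $\overrightarrow{p_c}$: critical probabilities of Bernoulli / oriented Bernoulli bond percolation on $\mathbb{Z}^d$, $d\ge2$. With $t_{\min}$ the minimum of the support of $\mathcal{L}$, $\mathcal{L}$ is useful if $\mathcal{L}(\{t_{\min}\})<p_c$ when $t_{\min}=0$ and $<\overrightarrow{p_c}$ when $t_{\min}>0$. *)

theory Defs
  imports "HOL-Probability.Probability"
begin

definition nn :: "int ^ 'd \<Rightarrow> int ^ 'd \<Rightarrow> bool" where
  "nn x y \<longleftrightarrow> (\<Sum>i\<in>UNIV. \<bar>x $ i - y $ i\<bar>) = 1"

definition unitv :: "'d \<Rightarrow> int ^ 'd" where
  "unitv i = (\<chi> j. if j = i then 1 else 0)"

definition bonds :: "'d::finite itself \<Rightarrow> (int ^ 'd) set set" where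
  "bonds _ = {{x, y} | x y. nn x y}"

definition obonds :: "'d::finite itself \<Rightarrow> ((int ^ 'd) \<times> (int ^ 'd)) set" where
  "obonds _ = {(x, x + unitv i) | x i. True}"

definition perc_measure :: "'d::finite itself \<Rightarrow> real \<Rightarrow> ((int ^ 'd) set \<Rightarrow> bool) measure" where
  "perc_measure D p = PiM (bonds D) (\<lambda>_. measure_pmf (bernoulli_pmf p))"

definition open_cluster :: "((int ^ 'd) set \<Rightarrow> bool) \<Rightarrow> int ^ 'd \<Rightarrow> (int ^ 'd) set" where
  "open_cluster \<omega> x = {y. (x, y) \<in> {(u, v). nn u v \<and> \<omega> {u, v}}\<^sup>*}"

definition theta :: "'d::finite itself \<Rightarrow> real \<Rightarrow> real" where
  "theta D p = measure (perc_measure D p)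
     {\<omega> \<in> space (perc_measure D p). infinite (open_cluster \<omega> 0)}"

definition p_c :: "'d::finite itself \<Rightarrow> real" where
  "p_c D = Sup {p \<in> {0..1}. theta D p = 0}"

definition operc_measure :: "'d::finite itself \<Rightarrow> real \<Rightarrow> ((int ^ 'd) \<times> (int ^ 'd) \<Rightarrow> bool) measure" where
  "operc_measure D p = PiM (obonds D) (\<lambda>_. measure_pmf (bernoulli_pmf p))"

definition oopen_cluster :: "'d::finite itself \<Rightarrow> ((int ^ 'd) \<times> (int ^ 'd) \<Rightarrow> bool) \<Rightarrow> int ^ 'd \<Rightarrow> (int ^ 'd) set" where
  "oopen_cluster D \<omega> x = {y. (x, y) \<in> {e. e \<in> obonds D \<and> \<omega> e}\<^sup>*}"

definition otheta :: "'d::finite itself \<Rightarrow> real \<Rightarrow> real" where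
  "otheta D p = measure (operc_measure D p)
     {\<omega> \<in> space (operc_measure D p). infinite (oopen_cluster D \<omega> 0)}"

definition op_c :: "'d::finite itself \<Rightarrow> real" where
  "op_c D = Sup {p \<in> {0..1}. otheta D p = 0}"

definition support :: "ennreal measure \<Rightarrow> ennreal set" where
  "support L = {t. \<forall>U. open U \<and> t \<in> U \<longrightarrow> emeasure L U > 0}"

definition t_min :: "ennreal measure \<Rightarrow> ennreal" where
  "t_min L = Inf (support L)"

definition useful :: "'d::finite itself \<Rightarrow> ennreal measure \<Rightarrow> bool" where
  "useful D L \<longleftrightarrow>
     (if t_min L = 0 then measure L {t_min L} < p_c D
      else measure L {t_min L} < op_c D)"

definition cond_exp_given :: "'a measure \<Rightarrow> ('a \<Rightarrow> ennreal) \<Rightarrow> ('a \<Rightarrow> ennreal) \<Rightarrow> 'a \<Rightarrow> ennreal" where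
  "cond_exp_given M \<tau> f = nn_cond_exp M (vimage_algebra (space M) \<tau> borel) f"

end

theory Submission
  imports Defs
begin

(* Suppose all the sets in the conclusion are null. Then, given tau, almost surely either
   P(tau' >= tau | tau) = 0 or P(tau' <= tau - delta | tau) = 0 for every delta > 0: the difference
   tau' - tau has a conditionally almost sure sign. A one-signed variable with vanishing conditional
   mean vanishes (apply this on the truncations {tau <= k}, where the integrals are finite), so
   tau' = tau almost surely on {tau < oo}, and also on {tau = oo} because the events of finiteness
   coincide. Hence L = L', a contradiction. *)

lemma ennreal_le_if_le_add_inverse_Suc:
  fixes x y :: ennreal
  assumes le: "\<And>n. x \<le> y + ennreal (1 / real (Suc n))"
  shows "x \<le> y"
proof (rule ennreal_le_epsilon)
  fix e :: real
  assume "0 < e"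
  then obtain n where "inverse (real (Suc n)) < e"
    using reals_Archimedean by blast
  then have "ennreal (1 / real (Suc n)) \<le> ennreal e"
    by (intro ennreal_leI) (simp add: inverse_eq_divide)
  with le show "x \<le> y + ennreal e"
    by (meson add_left_mono order_trans)
qed

lemma AE_eq_if_AE_le_nn_integral_eq:
  assumes [measurable]: "f \<in> borel_measurable M" "g \<in> borel_measurable M"
    and le: "AE x in M. f x \<le> g x"
    and eq: "(\<integral>\<^sup>+x. f x \<partial>M) = (\<integral>\<^sup>+x. g x \<partial>M)"
    and fin: "(\<integral>\<^sup>+x. f x \<partial>M) \<noteq> \<infinity>"
  shows "AE x in M. f x = g x"
proof -
  have "AE x in M. g x \<le> f x"
  proof (rule ccontr)
    assume "\<not> (AE x in M. g x \<le> f x)"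
    with le fin have "(\<integral>\<^sup>+x. f x \<partial>M) < (\<integral>\<^sup>+x. g x \<partial>M)"
      by (intro nn_integral_less) auto
    with eq show False by simp
  qed
  with le show ?thesis
    by eventually_elim (rule antisym)
qed

context sigma_finite_subalgebra
begin

lemma set_nn_integral_eq_if_nn_cond_exp_eq:
  assumes [measurable]: "B \<in> sets F" "Y \<in> borel_measurable M"
    and cond: "AE x in M. nn_cond_exp M F Y x = X x"
  shows "(\<integral>\<^sup>+x. indicator B x * Y x \<partial>M) = (\<integral>\<^sup>+x. indicator B x * X x \<partial>M)"
proof -
  have "(\<integral>\<^sup>+x. indicator B x * Y x \<partial>M) = (\<integral>\<^sup>+x. indicator B x * nn_cond_exp M F Y x \<partial>M)"
    by (rule nn_cond_exp_intg[symmetric]) measurable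
  also have "\<dots> = (\<integral>\<^sup>+x. indicator B x * X x \<partial>M)"
    by (rule nn_integral_cong_AE) (use cond in auto)
  finally show ?thesis .
qed

lemma AE_not_in_if_nn_cond_exp_indicator_eq_0:
  assumes A [measurable]: "A \<in> sets F" and [measurable]: "B \<in> sets M"
    and zero: "\<And>x. x \<in> A \<Longrightarrow> nn_cond_exp M F (indicator B) x = 0"
  shows "AE x in M. x \<in> A \<longrightarrow> x \<notin> B"
proof -
  have [measurable]: "A \<in> sets M"
    using A subalg by (auto simp: subalgebra_def)
  have "(\<integral>\<^sup>+x. indicator A x * indicator B x \<partial>M)
      = (\<integral>\<^sup>+x. indicator A x * nn_cond_exp M F (indicator B) x \<partial>M)"
    by (rule nn_cond_exp_intg[symmetric]) measurable
  also have "\<dots> = (\<integral>\<^sup>+x. 0 \<partial>M)"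
    by (rule nn_integral_cong) (simp add: zero indicator_def)
  finally have "AE x in M. indicator A x * indicator B x = (0 :: ennreal)"
    by (subst nn_integral_0_iff_AE[symmetric]) simp_all
  then show ?thesis
    by eventually_elim (simp add: indicator_def split: if_splits)
qed

lemma AE_le_if_nn_cond_exp_indicator_gaps_eq_0:
  fixes X Y :: "'a \<Rightarrow> ennreal"
  assumes A [measurable]: "A \<in> sets F"
    and [measurable]: "X \<in> borel_measurable M" "Y \<in> borel_measurable M"
    and zero: "\<And>x m. x \<in> A \<Longrightarrow>
      nn_cond_exp M F (indicator {y \<in> space M. Y y + ennreal (1 / real (Suc m)) \<le> X y}) x = 0"
  shows "AE x in M. x \<in> A \<longrightarrow> X x \<le> Y x"
proof -
  have "AE x in M. x \<in> A \<longrightarrow> x \<notin> {y \<in> space M. Y y + ennreal (1 / real (Suc m)) \<le> X y}" for m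
    by (rule AE_not_in_if_nn_cond_exp_indicator_eq_0[OF A _ zero]) measurable
  then have "AE x in M. \<forall>m. x \<in> A \<longrightarrow> \<not> Y x + ennreal (1 / real (Suc m)) \<le> X x"
    using AE_space unfolding AE_all_countable by (blast intro: AE_mp)
  then show ?thesis
    by eventually_elim (metis ennreal_le_if_le_add_inverse_Suc less_imp_le not_le)
qed

end

context finite_measure_subalgebra
begin

lemma AE_eq_on_if_nn_cond_exp_eq_one_sided:
  fixes X Y :: "'a \<Rightarrow> ennreal"
  assumes [measurable]: "X \<in> borel_measurable F" "Y \<in> borel_measurable M"
    and A [measurable]: "A \<in> sets F"
    and cond: "AE x in M. nn_cond_exp M F Y x = X x"
    and one_sided: "(AE x in M. x \<in> A \<longrightarrow> Y x \<le> X x) \<or> (AE x in M. x \<in> A \<longrightarrow> X x \<le> Y x)"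
  shows "AE x in M. x \<in> A \<longrightarrow> X x < \<infinity> \<longrightarrow> Y x = X x"
proof -
  have "AE x in M. x \<in> A \<longrightarrow> X x \<le> of_nat k \<longrightarrow> Y x = X x" for k :: nat
  proof -
    define B where "B = {x \<in> space F. x \<in> A \<and> X x \<le> of_nat k}"
    have [measurable]: "B \<in> sets F"
      unfolding B_def by measurable
    then have [measurable]: "B \<in> sets M"
      using subalg by (auto simp: subalgebra_def)
    have [measurable]: "X \<in> borel_measurable M"
      by (rule measurable_from_subalg[OF subalg]) measurable
    let ?Y = "\<lambda>x. indicator B x * Y x" and ?X = "\<lambda>x. indicator B x * X x"
    have int_eq: "(\<integral>\<^sup>+x. ?Y x \<partial>M) = (\<integral>\<^sup>+x. ?X x \<partial>M)"
      by (rule set_nn_integral_eq_if_nn_cond_exp_eq[OF _ _ cond]) simp_all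
    have "(\<integral>\<^sup>+x. ?X x \<partial>M) \<le> (\<integral>\<^sup>+x. of_nat k \<partial>M)"
      by (intro nn_integral_mono) (auto simp: B_def indicator_def)
    also have "\<dots> < \<infinity>"
      using finite_emeasure_space by (simp add: less_top[symmetric] ennreal_mult_eq_top_iff)
    finally have fin: "(\<integral>\<^sup>+x. ?X x \<partial>M) \<noteq> \<infinity>"
      by simp
    from one_sided have "AE x in M. ?Y x = ?X x"
    proof
      assume "AE x in M. x \<in> A \<longrightarrow> Y x \<le> X x"
      then have "AE x in M. ?Y x \<le> ?X x"
        by eventually_elim (simp add: indicator_def B_def)
      with int_eq fin show ?thesis
        by (intro AE_eq_if_AE_le_nn_integral_eq) auto
    next
      assume "AE x in M. x \<in> A \<longrightarrow> X x \<le> Y x"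
      then have "AE x in M. ?X x \<le> ?Y x"
        by eventually_elim (simp add: indicator_def B_def)
      with int_eq fin have "AE x in M. ?X x = ?Y x"
        by (intro AE_eq_if_AE_le_nn_integral_eq) auto
      then show ?thesis
        by eventually_elim simp
    qed
    then show ?thesis
      by eventually_elim (use sets.sets_into_space[OF A] in \<open>auto simp: B_def indicator_def\<close>)
  qed
  then have "AE x in M. \<forall>k::nat. x \<in> A \<longrightarrow> X x \<le> of_nat k \<longrightarrow> Y x = X x"
    unfolding AE_all_countable by blast
  then show ?thesis
    by eventually_elim (metis ennreal_Ex_less_of_nat less_imp_le infinity_ennreal_def)
qed

lemma AE_nn_cond_exp_below_or_above_eq_0:
  fixes X Y :: "'a \<Rightarrow> ennreal"
  assumes [measurable]: "X \<in> borel_measurable M" "Y \<in> borel_measurable M"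
    and spread_null: "\<And>\<beta> \<delta> :: real. 0 < \<beta> \<Longrightarrow> 0 < \<delta> \<Longrightarrow>
      measure M {x \<in> space M. X x < \<infinity>
        \<and> nn_cond_exp M F (indicator {y \<in> space M. Y y + 2 * ennreal \<delta> \<le> X y}) x \<ge> ennreal \<beta>
        \<and> nn_cond_exp M F (indicator {y \<in> space M. Y y \<ge> X y}) x \<ge> ennreal \<beta>} = 0"
  shows "AE x in M. X x < \<infinity> \<longrightarrow>
    (\<forall>m. nn_cond_exp M F (indicator {y \<in> space M. Y y + ennreal (1 / real (Suc m)) \<le> X y}) x = 0)
    \<or> nn_cond_exp M F (indicator {y \<in> space M. X y \<le> Y y}) x = 0"
proof -
  define gap where "gap m = ennreal (1 / real (Suc m))" for m :: nat
  define below where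
    "below m = nn_cond_exp M F (indicator {y \<in> space M. Y y + gap m \<le> X y})" for m
  define above where "above = nn_cond_exp M F (indicator {y \<in> space M. X y \<le> Y y})"
  have [measurable]: "below m \<in> borel_measurable M" "above \<in> borel_measurable M" for m
    unfolding below_def above_def by measurable
  have "AE x in M. X x < \<infinity> \<longrightarrow> min (below m x) (above x) \<le> gap n" for m n
  proof -
    let ?S = "{x \<in> space M. X x < \<infinity> \<and> below m x \<ge> gap n \<and> above x \<ge> gap n}"
    have "2 * ennreal (1 / (2 * real (Suc m))) = gap m"
      unfolding gap_def
      by (subst ennreal_numeral[symmetric], subst ennreal_mult[symmetric]) (auto simp: field_simps)
    then have "measure M ?S = 0"
      using spread_null[of "1 / real (Suc n)" "1 / (2 * real (Suc m))"]
      by (simp add: below_def above_def gap_def)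
    then have "?S \<in> null_sets M"
      by (intro null_setsI) (simp_all add: emeasure_eq_measure)
    then show ?thesis
      by (rule AE_not_in[THEN AE_mp]) (auto intro!: AE_I2 simp: min_le_iff_disj)
  qed
  then have "AE x in M. \<forall>m n. X x < \<infinity> \<longrightarrow> min (below m x) (above x) \<le> gap n"
    unfolding AE_all_countable by blast
  then have "AE x in M. X x < \<infinity> \<longrightarrow> (\<forall>m. below m x = 0) \<or> above x = 0"
  proof eventually_elim
    case (elim x)
    have "min (below m x) (above x) = 0" if "X x < \<infinity>" for m
      using ennreal_le_if_le_add_inverse_Suc[of "min (below m x) (above x)" 0] elim that
      by (simp add: gap_def)
    then show ?case
      by (metis min_def)
  qed
  then show ?thesis
    by (simp add: below_def above_def gap_def)
qed

lemma AE_eq_if_nn_cond_exp_eq_and_spread_null: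
  fixes X Y :: "'a \<Rightarrow> ennreal"
  assumes X [measurable]: "X \<in> borel_measurable F" and Y [measurable]: "Y \<in> borel_measurable M"
    and cond: "AE x in M. nn_cond_exp M F Y x = X x"
    and spread_null: "\<And>\<beta> \<delta> :: real. 0 < \<beta> \<Longrightarrow> 0 < \<delta> \<Longrightarrow>
      measure M {x \<in> space M. X x < \<infinity>
        \<and> nn_cond_exp M F (indicator {y \<in> space M. Y y + 2 * ennreal \<delta> \<le> X y}) x \<ge> ennreal \<beta>
        \<and> nn_cond_exp M F (indicator {y \<in> space M. Y y \<ge> X y}) x \<ge> ennreal \<beta>} = 0"
  shows "AE x in M. X x < \<infinity> \<longrightarrow> Y x = X x"
proof -
  have [measurable]: "X \<in> borel_measurable M"
    by (rule measurable_from_subalg[OF subalg X])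
  have space_F: "space F = space M"
    using subalg by (simp add: subalgebra_def)
  define below where
    "below m = nn_cond_exp M F (indicator {y \<in> space M. Y y + ennreal (1 / real (Suc m)) \<le> X y})"
    for m :: nat
  define above where "above = nn_cond_exp M F (indicator {y \<in> space M. X y \<le> Y y})"
  have dichotomy: "AE x in M. X x < \<infinity> \<longrightarrow> (\<forall>m. below m x = 0) \<or> above x = 0"
    unfolding below_def above_def by (rule AE_nn_cond_exp_below_or_above_eq_0) (use spread_null in auto)
  define no_above where "no_above = {x \<in> space F. X x < \<infinity> \<and> above x = 0}"
  define no_below where "no_below = {x \<in> space F. X x < \<infinity> \<and> (\<forall>m. below m x = 0)}"
  have [measurable]: "no_above \<in> sets F" "no_below \<in> sets F"
    unfolding no_above_def no_below_def below_def above_def by measurable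
  have "AE x in M. x \<in> no_above \<longrightarrow> x \<notin> {y \<in> space M. X y \<le> Y y}"
    by (rule AE_not_in_if_nn_cond_exp_indicator_eq_0) (auto simp: no_above_def above_def)
  then have "AE x in M. x \<in> no_above \<longrightarrow> Y x \<le> X x"
    by eventually_elim (auto simp: no_above_def space_F)
  then have eq_on_no_above: "AE x in M. x \<in> no_above \<longrightarrow> X x < \<infinity> \<longrightarrow> Y x = X x"
    by (intro AE_eq_on_if_nn_cond_exp_eq_one_sided[OF X Y _ cond] disjI1) measurable
  have "AE x in M. x \<in> no_below \<longrightarrow> X x \<le> Y x"
    by (rule AE_le_if_nn_cond_exp_indicator_gaps_eq_0) (auto simp: no_below_def below_def)
  then have eq_on_no_below: "AE x in M. x \<in> no_below \<longrightarrow> X x < \<infinity> \<longrightarrow> Y x = X x"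
    by (intro AE_eq_on_if_nn_cond_exp_eq_one_sided[OF X Y _ cond] disjI2) measurable
  from dichotomy eq_on_no_above eq_on_no_below AE_space show ?thesis
    by eventually_elim (auto simp: no_above_def no_below_def space_F)
qed

end

theorem lemma3p2:
  fixes M :: "'a measure" and \<tau> \<tau>' :: "'a \<Rightarrow> ennreal" and L L' :: "ennreal measure"
  assumes d2: "CARD('d::finite) \<ge> 2"
    and P: "prob_space M"
    and meas: "\<tau> \<in> borel_measurable M" "\<tau>' \<in> borel_measurable M"
    and marg: "distr M borel \<tau> = L" "distr M borel \<tau>' = L'"
    and H1: "useful TYPE('d) L"
    and H2: "measure L {..<\<infinity>} > p_c TYPE('d)" "measure L' {..<\<infinity>} > p_c TYPE('d)"
    and H3: "L \<noteq> L'"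
    and le: "AE x in M. cond_exp_given M \<tau> \<tau>' x \<le> \<tau> x"
    and eq: "AE x in M. cond_exp_given M \<tau> \<tau>' x = \<tau> x"
    and fin: "AE x in M. (\<tau> x < \<infinity>) = (\<tau>' x < \<infinity>)"
  shows "\<exists>\<beta>::real. \<beta> > 0 \<and> (\<exists>\<delta>::real. \<delta> > 0 \<and>
     measure M {x \<in> space M. \<tau> x < \<infinity>
        \<and> cond_exp_given M \<tau> (indicator {y \<in> space M. \<tau>' y + 2 * ennreal \<delta> \<le> \<tau> y}) x \<ge> ennreal \<beta>
        \<and> cond_exp_given M \<tau> (indicator {y \<in> space M. \<tau>' y \<ge> \<tau> y}) x \<ge> ennreal \<beta>} > 0)"
proof (rule ccontr)
  assume no_spread: "\<not> ?thesis"
  interpret prob_space M by (rule P)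
  let ?F = "vimage_algebra (space M) \<tau> borel"
  interpret finite_measure_subalgebra M ?F
    by unfold_locales
      (auto simp: subalgebra_def sets_vimage_algebra2 intro: measurable_sets[OF meas(1)])
  have "AE x in M. \<tau> x < \<infinity> \<longrightarrow> \<tau>' x = \<tau> x"
  proof (rule AE_eq_if_nn_cond_exp_eq_and_spread_null)
    show "\<tau> \<in> borel_measurable ?F"
      by (rule measurable_vimage_algebra1) (use meas in auto)
    show "AE x in M. nn_cond_exp M ?F \<tau>' x = \<tau> x"
      using eq by (simp add: cond_exp_given_def)
    fix \<beta> \<delta> :: real
    assume "0 < \<beta>" "0 < \<delta>"
    with no_spread show "measure M {x \<in> space M. \<tau> x < \<infinity>
        \<and> nn_cond_exp M ?F (indicator {y \<in> space M. \<tau>' y + 2 * ennreal \<delta> \<le> \<tau> y}) x \<ge> ennreal \<beta>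
        \<and> nn_cond_exp M ?F (indicator {y \<in> space M. \<tau>' y \<ge> \<tau> y}) x \<ge> ennreal \<beta>} = 0"
      unfolding cond_exp_given_def by (meson measure_nonneg not_less order.antisym)
  qed (rule meas(2))
  with fin have "AE x in M. \<tau> x = \<tau>' x"
    by eventually_elim (metis infinity_ennreal_def less_top)
  then have "distr M borel \<tau> = distr M borel \<tau>'"
    by (intro distr_cong_AE) (simp_all add: meas)
  with marg H3 show False
    by simp
qed

end
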